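(* Let $n\ge 3$. There exist infinitely many profiles $\mathbf{p}\in\mathbb{Q}^{n!}$ such that for every permutation $\pi\in S_n$ with $\pi(n)\neq 1$, there is some $\mathbf{w}(\pi)\in W$ with $T_{\mathbf{w}(\pi)}\mathbf{p}\in C_\pi$.
   Context: Work over $\mathbb{Q}$. Let $W=\{\mathbf{x}\in\mathbb{Q}^n : x_1>x_2>\cdots>x_n,\ x_1+\cdots+x_n=0\}$ (strict weighting vectors). For $\pi\in S_n$, let $C_\pi=\{\mathbf{x}\in\mathbb{Q}^n : x_{\pi(1)}>x_{\pi(2)}>\cdots>x_{\pi(n)}\}$. Label the permutations of $S_n$ as $\sigma_1,\dots,\sigma_{n!}$ in lexicographic order of one-line notation, and let $R_\ell$ be the $n\times n$ permutation matrix with $R_\ell(i,j)=1$ if $\sigma_\ell(j)=i$ and $0$ otherwise. For a weighting vector $\mathbf{w}$, $T_{\mathbf{w}}$ is the $n\times n!$ matrix whose $\ell$-th column is $R_\ell\mathbf{w}$, so for a profile $\mathbf{p}\in\mathbb{Q}^{n!}$ (where $p_\ell$ is the number of voters with preference $\sigma_\ell$, candidate $\sigma_\ell(k)$ being ranked $k$-th), $T_{\mathbf{w}}\mathbf{p}=\sum_{\ell=1}^{n!}p_\ell R_\ell\mathbf{w}$ is the results vector. *)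

theory Defs
  imports Complex_Main "HOL-Combinatorics.Permutations" "HOL-Library.List_Lexorder"
begin

text \<open>Vectors in Q^n are functions nat => rat, only indices 1..n matter.
  Profiles in Q^(n!) are functions nat => rat supported on 1..n!.\<close>

definition strict_weighting :: "nat \<Rightarrow> (nat \<Rightarrow> rat) set" where
  "strict_weighting n = {w. (\<forall>i\<in>{1..<n}. w i > w (Suc i)) \<and> (\<Sum>i=1..n. w i) = 0}"

definition cone :: "nat \<Rightarrow> (nat \<Rightarrow> nat) \<Rightarrow> (nat \<Rightarrow> rat) set" where
  "cone n \<pi> = {x. \<forall>k\<in>{1..<n}. x (\<pi> k) > x (\<pi> (Suc k))}"

definition oneline_perms_lex :: "nat \<Rightarrow> nat list list" where
  "oneline_perms_lex n = sorted_list_of_set {map \<sigma> [1..<Suc n] | \<sigma>. \<sigma> permutes {1..n}}"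

definition sigma :: "nat \<Rightarrow> nat \<Rightarrow> nat \<Rightarrow> nat" where
  "sigma n l j = (if j \<in> {1..n} then oneline_perms_lex n ! (l - 1) ! (j - 1) else j)"

definition Rmat :: "nat \<Rightarrow> nat \<Rightarrow> nat \<Rightarrow> nat \<Rightarrow> rat" where
  "Rmat n l i j = (if sigma n l j = i then 1 else 0)"

definition results :: "nat \<Rightarrow> (nat \<Rightarrow> rat) \<Rightarrow> (nat \<Rightarrow> rat) \<Rightarrow> nat \<Rightarrow> rat" where
  "results n w p i = (\<Sum>l=1..fact n. p l * (\<Sum>j=1..n. Rmat n l i j * w j))"

definition profile :: "nat \<Rightarrow> (nat \<Rightarrow> rat) \<Rightarrow> bool" where
  "profile n p \<longleftrightarrow> (\<forall>l. l \<notin> {1..fact n} \<longrightarrow> p l = 0)"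

end

theory Submission
  imports Defs
begin

(* For a weighting w with gaps d k = w (k - 1) - w k and D = w 1 - w n, the profile tally n has
   results D for candidate 1 and 2 D - (2 n - 1) d k for each candidate k >= 2. The order of the
   candidates other than 1 is thus the reverse of the order of their gaps and can be prescribed
   freely; making the gaps of the candidates that pi ranks below candidate 1 larger than 2 n^2
   puts the score D of candidate 1 strictly between the scores of its two neighbours in pi.
   Positive multiples of the profile then give infinitely many profiles. *)

lemma permutes_if_inj_on_endo:
  assumes "finite S" "f ` S \<subseteq> S" "inj_on f S" "\<And>x. x \<notin> S \<Longrightarrow> f x = x"
  shows "f permutes S"
proof (rule bij_imp_permutes)
  show "bij_betw f S S"
    using endo_inj_surj[OF assms(1-3)] assms(3) by (simp add: bij_betw_def)
qed (use assms(4) in auto)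

lemma sum_of_bool_eq_mult:
  fixes f :: "'a \<Rightarrow> 'b::semiring_1"
  assumes "finite A" "a \<in> A"
  shows "(\<Sum>x\<in>A. of_bool (x = a) * f x) = f a"
proof -
  have "of_bool (x = a) * f x = (if x = a then f a else 0)" for x
    by simp
  then show ?thesis
    using assms by simp
qed

lemma inj_on_oneline:
  "inj_on (\<lambda>\<sigma>. map \<sigma> [1..<Suc n]) {\<sigma>. \<sigma> permutes {1..n}}"
proof (rule inj_onI, rule ext)
  fix \<sigma> \<tau> j
  assume \<sigma>: "\<sigma> \<in> {\<sigma>. \<sigma> permutes {1..n}}" and \<tau>: "\<tau> \<in> {\<sigma>. \<sigma> permutes {1..n}}"
    and eq: "map \<sigma> [1..<Suc n] = map \<tau> [1..<Suc n]"
  show "\<sigma> j = \<tau> j"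
  proof (cases "j \<in> {1..n}")
    case True
    then show ?thesis using eq by (simp add: map_eq_conv del: upt_Suc)
  next
    case False
    then show ?thesis using \<sigma> \<tau> by (simp add: permutes_not_in)
  qed
qed

lemma set_oneline_perms_lex:
  "set (oneline_perms_lex n) = (\<lambda>\<sigma>. map \<sigma> [1..<Suc n]) ` {\<sigma>. \<sigma> permutes {1..n}}"
  unfolding oneline_perms_lex_def by (subst set_sorted_list_of_set) (auto simp: finite_permutations)

lemma length_oneline_perms_lex: "length (oneline_perms_lex n) = fact n"
proof -
  have "length (oneline_perms_lex n) = card (set (oneline_perms_lex n))"
    by (simp add: oneline_perms_lex_def distinct_card)
  also have "\<dots> = card {\<sigma>. \<sigma> permutes {1..n}}"
    using card_image[OF inj_on_oneline] by (simp add: set_oneline_perms_lex del: upt_Suc)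
  finally show ?thesis by (simp add: card_permutations)
qed

lemma sigma_bij: "bij_betw (sigma n) {1..fact n} {\<sigma>. \<sigma> permutes {1..n}}"
proof -
  let ?L = "oneline_perms_lex n"
  define of_oneline :: "nat list \<Rightarrow> nat \<Rightarrow> nat"
    where "of_oneline xs j = (if j \<in> {1..n} then xs ! (j - 1) else j)" for xs j
  have "bij_betw (\<lambda>l. l - 1) {1..fact n} {..<length ?L}"
    by (rule bij_betw_byWitness[where f' = Suc]) (auto simp: length_oneline_perms_lex)
  moreover have "bij_betw ((!) ?L) {..<length ?L} (set ?L)"
    by (rule bij_betw_nth) (simp_all add: oneline_perms_lex_def)
  moreover have "bij_betw of_oneline (set ?L) {\<sigma>. \<sigma> permutes {1..n}}"
  proof (rule bij_betw_byWitness[where f' = "\<lambda>\<sigma>. map \<sigma> [1..<Suc n]"])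
    have of_oneline: "of_oneline (map \<sigma> [1..<Suc n]) = \<sigma>" if "\<sigma> permutes {1..n}" for \<sigma>
      using that by (auto simp: of_oneline_def fun_eq_iff permutes_not_in simp del: upt_Suc)
    show "\<forall>xs\<in>set ?L. map (of_oneline xs) [1..<Suc n] = xs"
      and "\<forall>\<sigma>\<in>{\<sigma>. \<sigma> permutes {1..n}}. of_oneline (map \<sigma> [1..<Suc n]) = \<sigma>"
      and "of_oneline ` set ?L \<subseteq> {\<sigma>. \<sigma> permutes {1..n}}"
      and "(\<lambda>\<sigma>. map \<sigma> [1..<Suc n]) ` {\<sigma>. \<sigma> permutes {1..n}} \<subseteq> set ?L"
      by (auto simp: set_oneline_perms_lex of_oneline simp del: upt_Suc One_nat_def)
  qed
  ultimately have "bij_betw (of_oneline \<circ> (!) ?L \<circ> (\<lambda>l. l - 1))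
      {1..fact n} {\<sigma>. \<sigma> permutes {1..n}}"
    by (blast intro: bij_betw_trans)
  moreover have "of_oneline \<circ> (!) ?L \<circ> (\<lambda>l. l - 1) = sigma n"
    by (auto simp: of_oneline_def sigma_def fun_eq_iff)
  ultimately show ?thesis by simp
qed

definition profile_of :: "nat \<Rightarrow> ((nat \<Rightarrow> nat) \<Rightarrow> rat) \<Rightarrow> nat \<Rightarrow> rat" where
  "profile_of n f l = (if l \<in> {1..fact n} then f (sigma n l) else 0)"

lemma profile_profile_of: "profile n (profile_of n f)"
  by (simp add: profile_def profile_of_def)

lemma sum_Rmat_weighting:
  assumes "l \<in> {1..fact n}" "k \<in> {1..n}"
  shows "(\<Sum>j=1..n. Rmat n l k j * w j) = w (inv (sigma n l) k)"
proof -
  have \<sigma>: "sigma n l permutes {1..n}"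
    using bij_betwE[OF sigma_bij] assms(1) by blast
  have "Rmat n l k j = of_bool (j = inv (sigma n l) k)" for j
    using permutes_inv_eq[OF \<sigma>] unfolding Rmat_def by (metis of_bool_def)
  moreover have "inv (sigma n l) k \<in> {1..n}"
    using permutes_in_image[OF permutes_inv[OF \<sigma>]] assms(2) by simp
  ultimately show ?thesis
    by (simp add: sum_of_bool_eq_mult)
qed

lemma results_profile_of:
  assumes "k \<in> {1..n}"
  shows "results n w (profile_of n f) k = (\<Sum>\<sigma> | \<sigma> permutes {1..n}. f \<sigma> * w (inv \<sigma> k))"
proof -
  have "results n w (profile_of n f) k = (\<Sum>l=1..fact n. f (sigma n l) * w (inv (sigma n l) k))"
    unfolding results_def profile_of_def using sum_Rmat_weighting[OF _ assms] by simp
  also have "\<dots> = (\<Sum>\<sigma> | \<sigma> permutes {1..n}. f \<sigma> * w (inv \<sigma> k))"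
    by (rule sum.reindex_bij_betw[OF sigma_bij])
  finally show ?thesis .
qed

lemma results_scale: "results n w (\<lambda>l. c * p l) = (\<lambda>k. c * results n w p k)"
  unfolding results_def by (simp add: fun_eq_iff sum_distrib_left mult.assoc)

lemma cone_scale: "c > 0 \<Longrightarrow> x \<in> cone n \<pi> \<Longrightarrow> (\<lambda>i. c * x i) \<in> cone n \<pi>"
  by (simp add: cone_def)

(* A ballot is described by its rank assignment rho (candidate k is ranked rho k); the ballot
   itself is inv rho, and under it candidate k receives the weight w (rho k). *)
definition rank_shift :: "nat \<Rightarrow> nat \<Rightarrow> nat" where
  "rank_shift n k = (if k = 1 then n else if 2 \<le> k \<and> k \<le> n then k - 1 else k)"

definition rank_cycle :: "nat \<Rightarrow> nat \<Rightarrow> nat \<Rightarrow> nat" where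
  "rank_cycle n i k = (if k = i then 1 else if k = 1 then n else if k = n then i else k)"

lemma rank_shift_permutes: "n \<ge> 1 \<Longrightarrow> rank_shift n permutes {1..n}"
  by (rule permutes_if_inj_on_endo) (auto simp: rank_shift_def inj_on_def split: if_splits)

lemma rank_cycle_permutes: "i \<in> {2..n} \<Longrightarrow> rank_cycle n i permutes {1..n}"
  by (rule permutes_if_inj_on_endo) (auto simp: rank_cycle_def inj_on_def split: if_splits)

definition tally :: "nat \<Rightarrow> (nat \<Rightarrow> nat) \<Rightarrow> rat" where
  "tally n \<sigma> = (2 * of_nat n - 1) * (of_bool (\<sigma> = id) - of_bool (\<sigma> = inv (rank_shift n)))
     + 2 * (\<Sum>i=2..n. of_bool (\<sigma> = inv (rank_cycle n i)) - of_bool (\<sigma> = inv (transpose i n)))"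

lemma sum_signed_ballots:
  fixes h :: "'a \<Rightarrow> 'b::comm_ring_1"
  assumes "finite P" "finite I" "a \<in> P" "b \<in> P" "f ` I \<subseteq> P" "g ` I \<subseteq> P"
  shows "(\<Sum>x\<in>P. (c * (of_bool (x = a) - of_bool (x = b))
            + d * (\<Sum>i\<in>I. of_bool (x = f i) - of_bool (x = g i))) * h x)
         = c * (h a - h b) + d * (\<Sum>i\<in>I. h (f i) - h (g i))"
proof -
  have "(\<Sum>x\<in>P. (\<Sum>i\<in>I. of_bool (x = f i) - of_bool (x = g i)) * h x)
      = (\<Sum>i\<in>I. \<Sum>x\<in>P. of_bool (x = f i) * h x - of_bool (x = g i) * h x)"
    by (simp add: sum_distrib_right left_diff_distrib sum.swap[of _ P I])
  also have "\<dots> = (\<Sum>i\<in>I. h (f i) - h (g i))"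
    using assms by (simp add: sum_subtractf sum_of_bool_eq_mult subset_iff del: sum_of_bool_mult_eq)
  finally have pairs: "(\<Sum>x\<in>P. (\<Sum>i\<in>I. of_bool (x = f i) - of_bool (x = g i)) * h x)
      = (\<Sum>i\<in>I. h (f i) - h (g i))" .
  have "(\<Sum>x\<in>P. (c * (of_bool (x = a) - of_bool (x = b))
            + d * (\<Sum>i\<in>I. of_bool (x = f i) - of_bool (x = g i))) * h x)
      = c * ((\<Sum>x\<in>P. of_bool (x = a) * h x) - (\<Sum>x\<in>P. of_bool (x = b) * h x))
        + d * (\<Sum>x\<in>P. (\<Sum>i\<in>I. of_bool (x = f i) - of_bool (x = g i)) * h x)"
    by (simp add: algebra_simps sum.distrib sum_subtractf sum_distrib_left
        del: sum_of_bool_mult_eq sum_mult_of_bool_eq)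
  then show ?thesis
    using assms pairs by (simp add: sum_of_bool_eq_mult del: sum_of_bool_mult_eq)
qed

lemma results_tally:
  assumes "n \<ge> 2" "k \<in> {1..n}"
  shows "results n w (profile_of n (tally n)) k = (2 * of_nat n - 1) * (w k - w (rank_shift n k))
     + 2 * (\<Sum>i=2..n. w (rank_cycle n i k) - w (transpose i n k))"
proof -
  let ?P = "{\<sigma>. \<sigma> permutes {1..n}}"
  let ?h = "\<lambda>\<sigma>. w (inv \<sigma> k)"
  have ballot: "inv \<rho> \<in> ?P" "?h (inv \<rho>) = w (\<rho> k)" if "\<rho> permutes {1..n}" for \<rho>
    using that by (simp_all add: permutes_inv permutes_inv_inv)
  have shift: "rank_shift n permutes {1..n}"
    using assms(1) by (intro rank_shift_permutes) simp
  have cycle: "rank_cycle n i permutes {1..n}" if "i \<in> {2..n}" for i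
    using that by (rule rank_cycle_permutes)
  have swap: "transpose i n permutes {1..n}" if "i \<in> {2..n}" for i
    using that by (intro permutes_swap_id) auto
  have "results n w (profile_of n (tally n)) k = (\<Sum>\<sigma>\<in>?P. tally n \<sigma> * ?h \<sigma>)"
    using results_profile_of[OF assms(2)] by simp
  also have "\<dots> = (2 * of_nat n - 1) * (?h id - ?h (inv (rank_shift n)))
     + 2 * (\<Sum>i=2..n. ?h (inv (rank_cycle n i)) - ?h (inv (transpose i n)))"
    unfolding tally_def
    by (rule sum_signed_ballots) (use ballot shift cycle swap in \<open>auto simp: finite_permutations permutes_id\<close>)
  also have "\<dots> = (2 * of_nat n - 1) * (w k - w (rank_shift n k))
     + 2 * (\<Sum>i=2..n. w (rank_cycle n i k) - w (transpose i n k))"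
    using ballot[OF shift] ballot[OF cycle] ballot[OF swap] by simp
  finally show ?thesis .
qed

lemma results_tally_first:
  assumes "n \<ge> 2"
  shows "results n w (profile_of n (tally n)) 1 = w 1 - w n"
proof -
  have "(\<Sum>i=2..n. w (rank_cycle n i 1) - w (transpose i n 1)) = (\<Sum>i=2..n. w n - w 1)"
    by (rule sum.cong) (use assms in \<open>auto simp: rank_cycle_def transpose_def\<close>)
  also have "\<dots> = (of_nat n - 1) * (w n - w 1)"
    using assms by (simp add: of_nat_diff)
  finally show ?thesis
    using assms by (simp add: results_tally rank_shift_def algebra_simps)
qed

lemma results_tally_other:
  assumes "n \<ge> 2" "k \<in> {2..n}"
  shows "results n w (profile_of n (tally n)) k = (2 * of_nat n - 1) * (w k - w (k - 1)) + 2 * (w 1 - w n)"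
proof -
  have "(\<Sum>i=2..n. w (rank_cycle n i k) - w (transpose i n k)) = (\<Sum>i=2..n. if i = k then w 1 - w n else 0)"
    by (rule sum.cong) (use assms in \<open>auto simp: rank_cycle_def transpose_def\<close>)
  also have "\<dots> = w 1 - w n"
    using assms(2) by simp
  finally show ?thesis
    using assms by (simp add: results_tally rank_shift_def)
qed

definition gap_weighting :: "nat \<Rightarrow> (nat \<Rightarrow> rat) \<Rightarrow> nat \<Rightarrow> rat" where
  "gap_weighting n d k = (\<Sum>j=Suc k..n. d j) - (\<Sum>i=1..n. \<Sum>j=Suc i..n. d j) / of_nat n"

lemma gap_weighting_Suc:
  "k < n \<Longrightarrow> gap_weighting n d k = d (Suc k) + gap_weighting n d (Suc k)"
  unfolding gap_weighting_def by (simp add: sum.atLeast_Suc_atMost)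

lemma gap_weighting_span:
  "n \<ge> 1 \<Longrightarrow> gap_weighting n d 1 - gap_weighting n d n = (\<Sum>j=2..n. d j)"
  by (simp add: gap_weighting_def numeral_2_eq_2)

lemma gap_weighting_in_strict_weighting:
  assumes "\<And>j. j \<in> {2..n} \<Longrightarrow> d j > 0"
  shows "gap_weighting n d \<in> strict_weighting n"
proof -
  have "gap_weighting n d k > gap_weighting n d (Suc k)" if "k \<in> {1..<n}" for k
    using that gap_weighting_Suc[of k n d] assms[of "Suc k"] by auto
  moreover have "(\<Sum>i=1..n. gap_weighting n d i) = 0"
    by (simp add: gap_weighting_def sum_subtractf)
  ultimately show ?thesis
    by (simp add: strict_weighting_def)
qed

lemma results_tally_gap_weighting:
  assumes "n \<ge> 2"
  shows "results n (gap_weighting n d) (profile_of n (tally n)) 1 = (\<Sum>j=2..n. d j)"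
    and "k \<in> {2..n} \<Longrightarrow> results n (gap_weighting n d) (profile_of n (tally n)) k
           = 2 * (\<Sum>j=2..n. d j) - (2 * of_nat n - 1) * d k"
proof -
  show "results n (gap_weighting n d) (profile_of n (tally n)) 1 = (\<Sum>j=2..n. d j)"
    using results_tally_first[OF assms] gap_weighting_span[of n d] assms by simp
  assume k: "k \<in> {2..n}"
  then have "gap_weighting n d (k - 1) = d k + gap_weighting n d k"
    using gap_weighting_Suc[of "k - 1" n d] by auto
  then show "results n (gap_weighting n d) (profile_of n (tally n)) k
           = 2 * (\<Sum>j=2..n. d j) - (2 * of_nat n - 1) * d k"
    using results_tally_other[OF assms k, where w = "gap_weighting n d"] gap_weighting_span[of n d] assms
    by (simp add: algebra_simps)
qed

lemma cone_if_interleaved: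
  fixes x t :: "nat \<Rightarrow> rat"
  assumes "x (\<pi> m) = D"
    and "\<And>q. q \<in> {1..n} \<Longrightarrow> q \<noteq> m \<Longrightarrow> x (\<pi> q) = 2 * D - c * t q"
    and "c > 0" "strict_mono t"
    and "\<And>q. q < m \<Longrightarrow> c * t q < D"
    and "\<And>q. m < q \<Longrightarrow> q \<le> n \<Longrightarrow> D < c * t q"
  shows "x \<in> cone n \<pi>"
  unfolding cone_def
proof (intro CollectI ballI)
  fix q assume q: "q \<in> {1..<n}"
  consider "q = m" | "Suc q = m" | "q \<noteq> m" "Suc q \<noteq> m" by blast
  then show "x (\<pi> q) > x (\<pi> (Suc q))"
  proof cases
    case 1
    have "x (\<pi> (Suc q)) = 2 * D - c * t (Suc q)" "D < c * t (Suc q)"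
      using assms(2)[of "Suc q"] assms(6)[of "Suc q"] q 1 by auto
    then show ?thesis using assms(1) 1 by simp
  next
    case 2
    have "x (\<pi> q) = 2 * D - c * t q" "c * t q < D"
      using assms(2)[of q] assms(5)[of q] q 2 by auto
    then show ?thesis using assms(1) 2 by simp
  next
    case 3
    have "c * t q < c * t (Suc q)"
      using assms(3,4) by (simp add: strict_mono_Suc_iff)
    then show ?thesis using assms(2)[of q] assms(2)[of "Suc q"] q 3 by simp
  qed
qed

(* Gaps by position in pi, where m is the position of candidate 1: the jump by 2 n^2 after
   position m separates the scores of the candidates ranked above and below candidate 1. *)
definition position_gap :: "nat \<Rightarrow> nat \<Rightarrow> nat \<Rightarrow> rat" where
  "position_gap n m q = of_nat (if q < m then q else 2 * n\<^sup>2 + q)"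

lemma strict_mono_position_gap: "strict_mono (position_gap n m)"
  unfolding strict_mono_Suc_iff by (simp add: position_gap_def)

lemma sum_position_gap_bounds:
  assumes "n \<ge> 2" "\<pi> permutes {1..n}" "\<pi> n \<noteq> 1"
  defines "D \<equiv> (\<Sum>j=2..n. position_gap n (inv \<pi> 1) (inv \<pi> j))"
  shows "2 * of_nat n ^ 2 + of_nat n \<le> D" and "D \<le> (of_nat n - 1) * (2 * of_nat n ^ 2 + of_nat n)"
proof -
  have inv_le: "inv \<pi> j \<le> n" if "j \<in> {1..n}" for j
    using permutes_in_image[OF permutes_inv[OF assms(2)]] that by auto
  have "\<pi> n \<in> {1..n}"
    using assms(1) permutes_in_image[OF assms(2), of n] by simp
  then have "\<pi> n \<in> {2..n}"
    using assms(3) by auto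
  then have "position_gap n (inv \<pi> 1) (inv \<pi> (\<pi> n)) \<le> D"
    unfolding D_def by (rule member_le_sum) (auto simp: position_gap_def)
  moreover have "inv \<pi> 1 \<noteq> n"
    using assms(3) permutes_inverses(1)[OF assms(2)] by metis
  then have "\<not> n < inv \<pi> 1"
    using inv_le[of 1] assms(1) by simp
  then have "position_gap n (inv \<pi> 1) (inv \<pi> (\<pi> n)) = 2 * of_nat n ^ 2 + of_nat n"
    by (simp add: position_gap_def permutes_inverses(2)[OF assms(2)])
  ultimately show "2 * of_nat n ^ 2 + of_nat n \<le> D"
    by simp
  have "D \<le> (\<Sum>j=2..n. 2 * of_nat n ^ 2 + of_nat n)"
  proof (unfold D_def, rule sum_mono)
    fix j assume "j \<in> {2..n}"
    then have "(if inv \<pi> j < inv \<pi> 1 then inv \<pi> j else 2 * n\<^sup>2 + inv \<pi> j) \<le> 2 * n\<^sup>2 + n"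
      using inv_le[of j] by auto
    then have "position_gap n (inv \<pi> 1) (inv \<pi> j) \<le> of_nat (2 * n\<^sup>2 + n)"
      unfolding position_gap_def by (rule of_nat_mono)
    then show "position_gap n (inv \<pi> 1) (inv \<pi> j) \<le> 2 * of_nat n ^ 2 + of_nat n"
      by simp
  qed
  then show "D \<le> (of_nat n - 1) * (2 * of_nat n ^ 2 + of_nat n)"
    using assms(1) by (simp add: of_nat_diff)
qed

lemma position_gap_before:
  assumes "q < m" "m \<le> n"
  shows "(2 * of_nat n - 1) * position_gap n m q < 2 * of_nat n ^ 2 + of_nat n"
proof -
  let ?N = "of_nat n :: rat"
  have "of_nat (Suc q) \<le> ?N"
    using assms by (simp only: of_nat_le_iff)
  then have "(2 * ?N - 1) * of_nat q \<le> (2 * ?N - 1) * (?N - 1)"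
    by (intro mult_left_mono) simp_all
  also have "\<dots> = 2 * ?N ^ 2 + ?N - 4 * ?N + 1"
    by (simp add: algebra_simps power2_eq_square)
  also have "\<dots> < 2 * ?N ^ 2 + ?N"
    using assms by simp
  finally show ?thesis
    using assms(1) by (simp add: position_gap_def)
qed

lemma position_gap_after:
  assumes "m < q" "n \<ge> 1"
  shows "(of_nat n - 1) * (2 * of_nat n ^ 2 + of_nat n) < (2 * of_nat n - 1) * position_gap n m q"
proof -
  let ?N = "of_nat n :: rat"
  have "?N ^ 2 \<le> ?N ^ 3"
    using power_increasing[of 2 3 ?N] assms(2) by simp
  moreover have "(2 * ?N - 1) * (2 * ?N ^ 2 + 1) - (?N - 1) * (2 * ?N ^ 2 + ?N)
      = 2 * ?N ^ 3 - ?N ^ 2 + 3 * ?N - 1"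
    by (simp add: algebra_simps power2_eq_square power3_eq_cube)
  moreover have "0 \<le> ?N ^ 2"
    by simp
  ultimately have "(?N - 1) * (2 * ?N ^ 2 + ?N) < (2 * ?N - 1) * (2 * ?N ^ 2 + 1)"
    using assms(2) by linarith
  also have "\<dots> \<le> (2 * ?N - 1) * position_gap n m q"
    using assms by (intro mult_left_mono) (simp_all add: position_gap_def)
  finally show ?thesis .
qed

lemma tally_results_in_cone:
  assumes "n \<ge> 2" "\<pi> permutes {1..n}" "\<pi> n \<noteq> 1"
  shows "\<exists>w\<in>strict_weighting n. results n w (profile_of n (tally n)) \<in> cone n \<pi>"
proof -
  define m where "m = inv \<pi> 1"
  define d where "d j = position_gap n m (inv \<pi> j)" for j
  define D where "D = (\<Sum>j=2..n. d j)"
  have n1: "n \<ge> 1"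
    using assms(1) by simp
  have \<pi>_in: "\<pi> q \<in> {1..n} \<longleftrightarrow> q \<in> {1..n}"
    and inv_in: "inv \<pi> q \<in> {1..n} \<longleftrightarrow> q \<in> {1..n}" for q
    using permutes_in_image[OF assms(2)] permutes_in_image[OF permutes_inv[OF assms(2)]] by auto
  have m: "\<pi> m = 1" "m \<le> n"
    using permutes_inverses(1)[OF assms(2)] inv_in[of 1] assms(1) by (auto simp: m_def)
  have "d j > 0" if "j \<in> {2..n}" for j
    using inv_in[of j] that by (auto simp: d_def position_gap_def)
  then have w: "gap_weighting n d \<in> strict_weighting n"
    by (rule gap_weighting_in_strict_weighting)
  have "results n (gap_weighting n d) (profile_of n (tally n)) \<in> cone n \<pi>"
  proof (rule cone_if_interleaved[where m = m and D = D and c = "2 * of_nat n - 1" and t = "position_gap n m"])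
    show "results n (gap_weighting n d) (profile_of n (tally n)) (\<pi> m) = D"
      using results_tally_gap_weighting(1)[OF assms(1)] m by (simp add: D_def)
    fix q
    show "results n (gap_weighting n d) (profile_of n (tally n)) (\<pi> q)
        = 2 * D - (2 * of_nat n - 1) * position_gap n m q" if "q \<in> {1..n}" "q \<noteq> m"
    proof -
      have "\<pi> q \<noteq> 1"
        using that permutes_inverses(2)[OF assms(2)] by (metis m_def)
      then have "\<pi> q \<in> {2..n}"
        using \<pi>_in[of q] that(1) by auto
      then show ?thesis
        using results_tally_gap_weighting(2)[OF assms(1)] permutes_inverses(2)[OF assms(2)]
        by (simp add: D_def d_def)
    qed
    show "(2 * of_nat n - 1) * position_gap n m q < D" if "q < m"
      using position_gap_before[OF that m(2)] sum_position_gap_bounds(1)[OF assms]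
      by (simp add: D_def d_def m_def)
    show "D < (2 * of_nat n - 1) * position_gap n m q" if "m < q" "q \<le> n"
      using position_gap_after[OF that(1) n1] sum_position_gap_bounds(2)[OF assms]
      unfolding D_def d_def m_def by linarith
  qed (use assms(1) strict_mono_position_gap in auto)
  with w show ?thesis
    by blast
qed

lemma profile_of_tally_nonzero:
  assumes "n \<ge> 2"
  shows "\<exists>l. profile_of n (tally n) l \<noteq> 0"
proof (rule ccontr)
  assume "\<not> ?thesis"
  then have "results n (gap_weighting n (\<lambda>_. 1)) (profile_of n (tally n)) 1 = 0"
    by (simp add: results_def)
  moreover have "results n (gap_weighting n (\<lambda>_. 1)) (profile_of n (tally n)) 1 = of_nat n - 1"
    using results_tally_gap_weighting(1)[OF assms] assms by (simp add: of_nat_diff)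
  ultimately show False
    using assms by simp
qed

lemma infinite_range_multiples:
  fixes p :: "'a \<Rightarrow> 'b::field_char_0"
  assumes "p l \<noteq> 0"
  shows "infinite (range (\<lambda>k x. of_nat (Suc k) * p x))"
proof -
  have "inj (\<lambda>k x. of_nat (Suc k) * p x)"
  proof (rule injI)
    fix a b :: nat
    assume "(\<lambda>x. of_nat (Suc a) * p x) = (\<lambda>x. of_nat (Suc b) * p x)"
    then have "of_nat (Suc a) * p l = of_nat (Suc b) * p l"
      by metis
    then show "a = b"
      using assms by (simp del: of_nat_Suc)
  qed
  then show ?thesis
    using finite_imageD infinite_UNIV_nat by blast
qed

theorem theorem3p6:
  fixes n :: nat
  assumes "n \<ge> 3"
  shows "infinite {p. profile n p \<and>
           (\<forall>\<pi>. \<pi> permutes {1..n} \<and> \<pi> n \<noteq> 1 \<longrightarrow>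
              (\<exists>w \<in> strict_weighting n. results n w p \<in> cone n \<pi>))}"
proof (rule infinite_super)
  let ?p = "profile_of n (tally n)"
  have n: "n \<ge> 2"
    using assms by simp
  obtain l where "?p l \<noteq> 0"
    using profile_of_tally_nonzero[OF n] by blast
  then show "infinite (range (\<lambda>k l. of_nat (Suc k) * ?p l))"
    by (rule infinite_range_multiples)
  have "profile n (\<lambda>l. c * ?p l)" for c
    using profile_profile_of[of n "tally n"] by (simp add: profile_def)
  moreover have "\<exists>w \<in> strict_weighting n. results n w (\<lambda>l. c * ?p l) \<in> cone n \<pi>"
    if "c > 0" "\<pi> permutes {1..n}" "\<pi> n \<noteq> 1" for c \<pi>
    using tally_results_in_cone[OF n that(2,3)] cone_scale[OF that(1)] by (auto simp: results_scale)
  ultimately show "range (\<lambda>k l. of_nat (Suc k) * ?p l) \<subseteq> {p. profile n p \<and>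
           (\<forall>\<pi>. \<pi> permutes {1..n} \<and> \<pi> n \<noteq> 1 \<longrightarrow>
              (\<exists>w \<in> strict_weighting n. results n w p \<in> cone n \<pi>))}"
    by (auto simp del: of_nat_Suc)
qed

end
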